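(* For every $\beta\in(0,1)$ there exist a probability measure $\mu$ on $\Omega=[0,1]$ (with the metric $\rho(x,y)=|x-y|$), a function $f:[0,1]\to[0,1]$ and $L<\infty$ such that: (i) $f\in\overline{\mathrm{H\ddot{o}l}}^\beta_L(\Omega,\mu)$; (ii) for every $M>0$, $f\notin\mathrm{H\ddot{o}l}^\beta_M(\Omega)$; (iii) for every $M>0$, $f\notin\widetilde{\mathrm{Lip}}_M(\Omega,\mu)$. (For instance $f=\mathbf{1}[x>1/2]$ and $d\mu/dx\propto|x-1/2|^{(\beta-1)/2}$.)
   Context: For $f:\Omega\to\mathbb{R}$ and $\beta\in(0,1]$, $\Lambda_f^\beta(x):=\sup_{y\ne x}\frac{|f(x)-f(y)|}{\rho(x,y)^\beta}$, $\|f\|_{\mathrm{H\ddot{o}l}^\beta}:=\sup_x\Lambda_f^\beta(x)$, $\overline{\Lambda}_f^\beta(\mu):=\mathbb{E}_{X\sim\mu}\Lambda_f^\beta(X)$, $\widetilde{\Lambda}_f^\beta(\mu):=\sup_{t>0}t\,\mu(\{x:\Lambda_f^\beta(x)\ge t\})$. $\mathrm{H\ddot{o}l}^\beta_M(\Omega):=\{f:\Omega\to[0,1]:\|f\|_{\mathrm{H\ddot{o}l}^\beta}\le M\}$, $\overline{\mathrm{H\ddot{o}l}}^\beta_L(\Omega,\mu):=\{f:\Omega\to[0,1]:\overline{\Lambda}_f^\beta(\mu)\le L\}$, and $\widetilde{\mathrm{Lip}}_M(\Omega,\mu):=\{f:\Omega\to[0,1]:\widetilde{\Lambda}_f^1(\mu)\le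 M\}$. *)

theory Defs
  imports "HOL-Analysis.Analysis" "HOL-Probability.Probability"
begin

definition hol_const :: "'a::metric_space set \<Rightarrow> real \<Rightarrow> ('a \<Rightarrow> real) \<Rightarrow> 'a \<Rightarrow> ennreal" where
  "hol_const \<Omega> b f x = (SUP y\<in>\<Omega> - {x}. ennreal (\<bar>f x - f y\<bar> / dist x y powr b))"

definition Hol :: "real \<Rightarrow> real \<Rightarrow> 'a::metric_space set \<Rightarrow> ('a \<Rightarrow> real) set" where
  "Hol b M \<Omega> = {f. f ` \<Omega> \<subseteq> {0..1} \<and> (SUP x\<in>\<Omega>. hol_const \<Omega> b f x) \<le> ennreal M}"

definition avgHol :: "real \<Rightarrow> real \<Rightarrow> 'a::metric_space set \<Rightarrow> 'a measure \<Rightarrow> ('a \<Rightarrow> real) set" where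
  "avgHol b L \<Omega> \<mu> = {f. f ` \<Omega> \<subseteq> {0..1} \<and> (\<integral>\<^sup>+ x. hol_const \<Omega> b f x \<partial>\<mu>) \<le> ennreal L}"

definition weakLip :: "real \<Rightarrow> 'a::metric_space set \<Rightarrow> 'a measure \<Rightarrow> ('a \<Rightarrow> real) set" where
  "weakLip M \<Omega> \<mu> = {f. f ` \<Omega> \<subseteq> {0..1} \<and>
     (SUP t\<in>{0<..}. ennreal t * emeasure \<mu> {x \<in> space \<mu>. ennreal t \<le> hol_const \<Omega> 1 f x}) \<le> ennreal M}"

end

theory Submission
  imports Defs
begin

text \<open>
  Take for f the indicator of the point 1/2. Its pointwise Hoelder constant is
  1 / \<bar>x - 1/2\<bar>^\<beta> away from 1/2 and infinite at 1/2, so f is not Hoelder; but 1/2 is a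
  \<mu>-null point, so it does not affect averages. Let \<mu> put mass 2^-(n+1) on the point
  1/2 + r^(n+1), where 2^(-1/\<beta>) < r < 1/2. The average Hoelder constant is then a
  geometric series with ratio 1 / (2 r^\<beta>) < 1, whereas the Lipschitz constant is at least
  t = r^-(k+1) on a set of mass 2^-(k+1), and t times that mass is (2r)^-(k+1), which is
  unbounded in k.
\<close>

definition spike :: "'a \<Rightarrow> 'a \<Rightarrow> real" where
  "spike a x = (if x = a then 1 else 0)"

lemma spike_range: "spike a ` \<Omega> \<subseteq> {0..1}"
  by (auto simp: spike_def)

lemma hol_const_spike:
  assumes "x \<in> \<Omega>" "a \<in> \<Omega>" "x \<noteq> a"
  shows "hol_const \<Omega> b (spike a) x = ennreal (1 / dist x a powr b)"
proof (rule antisym)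
  show "hol_const \<Omega> b (spike a) x \<le> ennreal (1 / dist x a powr b)"
    unfolding hol_const_def
    by (rule SUP_least) (use assms in \<open>auto simp: spike_def dist_commute\<close>)
  show "ennreal (1 / dist x a powr b) \<le> hol_const \<Omega> b (spike a) x"
    unfolding hol_const_def
    by (rule SUP_upper2[where i=a]) (use assms in \<open>auto simp: spike_def\<close>)
qed

lemma hol_const_spike_at:
  assumes "0 < b" "a islimpt \<Omega>"
  shows "hol_const \<Omega> b (spike a) a = \<infinity>"
proof -
  have "(SUP y\<in>\<Omega> - {a}. ennreal (\<bar>spike a a - spike a y\<bar> / dist a y powr b)) = top"
  proof (rule ennreal_SUP_eq_top)
    fix n :: nat
    define e where "e = (1 / (real n + 1)) powr (1 / b)"
    have "e > 0" by (simp add: e_def)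
    then obtain y where y: "y \<in> \<Omega>" "y \<noteq> a" "dist y a < e"
      using assms(2) islimpt_approachable by blast
    have "dist a y powr b \<le> e powr b"
      using y(3) assms(1) by (intro powr_mono2) (auto simp: dist_commute)
    also have "e powr b = 1 / (real n + 1)"
      using assms(1) by (simp add: e_def powr_powr)
    finally have "real n + 1 \<le> 1 / dist a y powr b"
      using y(2) by (simp add: field_simps)
    then have "real n \<le> 1 / dist a y powr b"
      by linarith
    then show "\<exists>y\<in>\<Omega> - {a}. of_nat n \<le> ennreal (\<bar>spike a a - spike a y\<bar> / dist a y powr b)"
      using y by (intro bexI[of _ y]) (auto simp: spike_def ennreal_of_nat_eq_real_of_nat)
  qed
  then show ?thesis
    by (simp add: hol_const_def)
qed

lemma hol_const_spike_measurable:
  fixes a :: "'a::metric_space"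
  assumes "0 < b" "a \<in> \<Omega>" "a islimpt \<Omega>"
  shows "hol_const \<Omega> b (spike a) \<in> borel_measurable (restrict_space borel \<Omega>)"
proof -
  let ?g = "\<lambda>x. if x = a then \<infinity> else ennreal (1 / dist x a powr b)"
  have [measurable]: "(\<lambda>x. dist x a) \<in> borel_measurable borel"
    by (intro borel_measurable_continuous_onI continuous_intros)
  have [measurable]: "{a} \<in> sets borel"
    by (simp add: borel_closed)
  have "?g \<in> borel_measurable borel" by measurable
  then have "?g \<in> borel_measurable (restrict_space borel \<Omega>)"
    by (rule measurable_restrict_space1)
  moreover have "?g x = hol_const \<Omega> b (spike a) x" if "x \<in> \<Omega>" for x
    using that assms by (cases "x = a") (simp_all add: hol_const_spike hol_const_spike_at)
  ultimately show ?thesis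
    using measurable_cong[of "restrict_space borel \<Omega>" ?g "hol_const \<Omega> b (spike a)" borel]
    by (simp add: space_restrict_space)
qed

lemma spike_not_Hol:
  assumes "0 < b" "a \<in> \<Omega>" "a islimpt \<Omega>"
  shows "spike a \<notin> Hol b M \<Omega>"
proof
  assume "spike a \<in> Hol b M \<Omega>"
  then have "(SUP x\<in>\<Omega>. hol_const \<Omega> b (spike a) x) \<le> ennreal M"
    by (simp add: Hol_def)
  moreover have "hol_const \<Omega> b (spike a) a \<le> (SUP x\<in>\<Omega>. hol_const \<Omega> b (spike a) x)"
    using assms(2) by (rule SUP_upper)
  ultimately have "\<infinity> \<le> ennreal M"
    using hol_const_spike_at[OF assms(1,3)] by simp
  then show False
    by (simp add: top_unique)
qed

lemma hol_const_spike_half_measurable: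
  assumes "0 < b"
  shows "hol_const {0..1} b (spike (1/2::real)) \<in> borel_measurable (restrict_space borel {0..1})"
  using assms by (simp add: hol_const_spike_measurable)

lemma nn_integral_distr_pmf_nat:
  fixes P :: "nat pmf"
  assumes "X \<in> measurable (measure_pmf P) N" "g \<in> borel_measurable N"
  shows "(\<integral>\<^sup>+ x. g x \<partial>distr (measure_pmf P) N X) = (\<Sum>n. ennreal (pmf P n) * g (X n))"
  using assms
  by (simp add: nn_integral_distr nn_integral_measure_pmf nn_integral_count_space_nat)

lemma pmf_le_emeasure_distr:
  assumes "X \<in> measurable (measure_pmf P) N" "S \<in> sets N" "X k \<in> S"
  shows "ennreal (pmf P k) \<le> emeasure (distr (measure_pmf P) N X) S"
proof -
  have "ennreal (pmf P k) = emeasure (measure_pmf P) {k}"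
    by (simp add: emeasure_pmf_single)
  also have "\<dots> \<le> emeasure (measure_pmf P) (X -` S \<inter> space (measure_pmf P))"
    using assms(3) by (intro emeasure_mono) auto
  also have "\<dots> = emeasure (distr (measure_pmf P) N X) S"
    using assms(1,2) by (simp add: emeasure_distr)
  finally show ?thesis .
qed

lemma pmf_geometric_half: "pmf (geometric_pmf (1/2)) n = (1/2 :: real) ^ Suc n"
  by simp

definition spike_sample :: "real \<Rightarrow> real measure" where
  "spike_sample r = distr (measure_pmf (geometric_pmf (1/2))) (restrict_space borel {0..1})
     (\<lambda>n. 1/2 + r ^ Suc n)"

context
  fixes r :: real
  assumes r_pos: "0 < r" and r_less_half: "r < 1/2"
begin

lemma spike_sample_points: "1/2 + r ^ Suc n \<in> {0..1::real}"
proof -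
  have "r ^ Suc n \<le> r"
    using r_pos r_less_half by (simp add: power_le_one mult_left_le)
  moreover have "0 \<le> r ^ Suc n"
    using r_pos by (rule less_imp_le[OF zero_less_power])
  ultimately show ?thesis
    using r_less_half unfolding atLeastAtMost_iff by linarith
qed

lemma spike_sample_measurable:
  "(\<lambda>n. 1/2 + r ^ Suc n) \<in> measurable (measure_pmf (geometric_pmf (1/2))) (restrict_space borel {0..1})"
  using spike_sample_points by (simp add: space_restrict_space)

lemma prob_space_spike_sample: "prob_space (spike_sample r)"
  unfolding spike_sample_def
  by (intro prob_space.prob_space_distr measure_pmf.prob_space_axioms spike_sample_measurable)

lemma space_spike_sample: "space (spike_sample r) = {0..1}"
  by (simp add: spike_sample_def space_restrict_space)

lemma sets_spike_sample: "sets (spike_sample r) = sets (restrict_space borel {0..1})"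
  by (simp add: spike_sample_def)

lemma hol_const_spike_sample_points:
  "hol_const {0..1} b (spike (1/2)) (1/2 + r ^ Suc n) = ennreal ((1 / r powr b) ^ Suc n)"
proof -
  have "(r ^ Suc n) powr b = r powr (real (Suc n) * b)"
    using r_pos by (simp only: powr_realpow[symmetric] powr_powr)
  also have "\<dots> = (r powr b) ^ Suc n"
    using r_pos by (simp only: powr_power)
  finally have power_eq: "(r ^ Suc n) powr b = (r powr b) ^ Suc n" .
  have "hol_const {0..1} b (spike (1/2)) (1/2 + r ^ Suc n) = ennreal (1 / (r ^ Suc n) powr b)"
    using spike_sample_points[of n] r_pos by (simp add: hol_const_spike dist_real_def del: power_Suc)
  also have "\<dots> = ennreal ((1 / r powr b) ^ Suc n)"
    by (simp only: power_eq power_one_over)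
  finally show ?thesis .
qed

lemma hol_const_spike_measurable_spike_sample:
  assumes "0 < b"
  shows "hol_const {0..1} b (spike (1/2)) \<in> borel_measurable (spike_sample r)"
  using hol_const_spike_half_measurable[OF assms]
  by (simp only: measurable_cong_sets[OF sets_spike_sample refl])

lemma nn_integral_hol_const_spike_sample:
  assumes "0 < b"
  shows "(\<integral>\<^sup>+ x. hol_const {0..1} b (spike (1/2)) x \<partial>spike_sample r)
           = (\<Sum>n. ennreal ((1 / (2 * r powr b)) ^ Suc n))"
proof -
  have term_eq: "ennreal (pmf (geometric_pmf (1/2)) n) * ennreal ((1 / r powr b) ^ Suc n)
          = ennreal ((1 / (2 * r powr b)) ^ Suc n)" for n
  proof -
    have "pmf (geometric_pmf (1/2)) n * (1 / r powr b) ^ Suc n = (1 / (2 * r powr b)) ^ Suc n"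
      by (simp only: pmf_geometric_half power_mult_distrib[symmetric]) simp
    then show ?thesis
      by (simp add: ennreal_mult[symmetric])
  qed
  have "(\<integral>\<^sup>+ x. hol_const {0..1} b (spike (1/2)) x \<partial>spike_sample r)
      = (\<Sum>n. ennreal (pmf (geometric_pmf (1/2)) n) * hol_const {0..1} b (spike (1/2)) (1/2 + r ^ Suc n))"
    unfolding spike_sample_def
    by (rule nn_integral_distr_pmf_nat[OF spike_sample_measurable hol_const_spike_half_measurable[OF assms]])
  also have "\<dots> = (\<Sum>n. ennreal ((1 / (2 * r powr b)) ^ Suc n))"
    by (simp only: hol_const_spike_sample_points term_eq)
  finally show ?thesis .
qed

lemma emeasure_spike_sample_level_set:
  "ennreal ((1/2) ^ Suc k) \<le> emeasure (spike_sample r)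
     {x \<in> space (spike_sample r). ennreal ((1 / r) ^ Suc k) \<le> hol_const {0..1} 1 (spike (1/2)) x}"
  (is "_ \<le> emeasure _ ?S")
proof -
  have "?S \<in> sets (spike_sample r)"
    using hol_const_spike_measurable_spike_sample[of 1] by measurable
  then have "?S \<in> sets (restrict_space borel {0..1})"
    by (simp only: sets_spike_sample)
  moreover have "hol_const {0..1} 1 (spike (1/2)) (1/2 + r ^ Suc k) = ennreal ((1 / r) ^ Suc k)"
    using hol_const_spike_sample_points[of 1 k] r_pos by (simp del: power_Suc)
  then have "1/2 + r ^ Suc k \<in> ?S"
    using spike_sample_points[of k] by (simp add: space_spike_sample del: power_Suc)
  ultimately have "ennreal (pmf (geometric_pmf (1/2)) k) \<le> emeasure (spike_sample r) ?S"
    unfolding spike_sample_def by (rule pmf_le_emeasure_distr[OF spike_sample_measurable])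
  then show ?thesis
    by (simp only: pmf_geometric_half)
qed

lemma spike_not_weakLip:
  assumes "0 < M"
  shows "spike (1/2) \<notin> weakLip M {0..1} (spike_sample r)"
proof
  assume "spike (1/2) \<in> weakLip M {0..1} (spike_sample r)"
  then have weak_bound: "(SUP t\<in>{0<..}. ennreal t * emeasure (spike_sample r)
      {x \<in> space (spike_sample r). ennreal t \<le> hol_const {0..1} 1 (spike (1/2)) x}) \<le> ennreal M"
    by (simp add: weakLip_def)
  define c where "c = 1 / (2 * r)"
  have "1 < c"
    using r_pos r_less_half by (simp add: c_def field_simps)
  then obtain k where "M < c ^ k"
    using real_arch_pow by blast
  moreover have "c ^ k \<le> c ^ Suc k"
    using \<open>1 < c\<close> by (intro power_increasing) auto
  ultimately have "M < c ^ Suc k"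
    by linarith
  define t where "t = (1 / r) ^ Suc k"
  have "ennreal (c ^ Suc k) = ennreal t * ennreal ((1/2) ^ Suc k)"
    using r_pos by (simp add: t_def c_def ennreal_mult[symmetric] power_mult_distrib[symmetric]
        mult.commute del: power_Suc)
  also have "\<dots> \<le> ennreal t * emeasure (spike_sample r)
      {x \<in> space (spike_sample r). ennreal t \<le> hol_const {0..1} 1 (spike (1/2)) x}"
    unfolding t_def by (intro mult_left_mono emeasure_spike_sample_level_set) simp
  also have "\<dots> \<le> ennreal M"
    using weak_bound r_pos unfolding t_def
    by (meson SUP_upper greaterThan_iff order_trans zero_less_divide_1_iff zero_less_power)
  finally show False
    using \<open>M < c ^ Suc k\<close> \<open>0 < M\<close> by simp
qed

end

lemma exists_ratio_powr_gt_half: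
  fixes \<beta> :: real
  assumes "0 < \<beta>" "\<beta> < 1"
  obtains r where "0 < r" "r < 1/2" "1/2 < r powr \<beta>"
proof -
  have "1 < 1 / \<beta>"
    using assms by simp
  then have "2 powr (- (1 / \<beta>)) < 2 powr (- 1)"
    by (intro powr_less_mono) auto
  also have "2 powr (- 1) = (1/2 :: real)"
    by (simp add: powr_minus)
  finally obtain r where r: "2 powr (- (1 / \<beta>)) < r" "r < 1/2"
    using dense by blast
  have "(1/2 :: real) = (2 powr (- (1 / \<beta>))) powr \<beta>"
    using assms(1) by (simp only: powr_powr) (simp add: powr_minus)
  also have "\<dots> < r powr \<beta>"
    using r(1) assms(1) by (intro powr_less_mono2) auto
  finally have "1/2 < r powr \<beta>" .
  moreover have "0 < r"
    using r(1) powr_gt_zero[of 2 "- (1 / \<beta>)"] by linarith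
  ultimately show thesis
    using r(2) that by blast
qed

theorem mainTheorem7:
  fixes \<beta> :: real
  assumes "0 < \<beta>" and "\<beta> < 1"
  shows "\<exists>(\<mu>::real measure) (f::real \<Rightarrow> real) (L::real).
           prob_space \<mu> \<and> space \<mu> = {0..1} \<and> sets \<mu> = sets (restrict_space borel {0..1::real}) \<and>
           f ` {0..1} \<subseteq> {0..1} \<and>
           hol_const {0..1} \<beta> f \<in> borel_measurable \<mu> \<and>
           hol_const {0..1} 1 f \<in> borel_measurable \<mu> \<and>
           f \<in> avgHol \<beta> L {0..1} \<mu> \<and>
           (\<forall>M>0. f \<notin> Hol \<beta> M {0..1}) \<and>
           (\<forall>M>0. f \<notin> weakLip M {0..1} \<mu>)"
proof -
  obtain r where r: "0 < r" "r < 1/2" "1/2 < r powr \<beta>"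
    using exists_ratio_powr_gt_half assms by blast
  define q where "q = 1 / (2 * r powr \<beta>)"
  define L where "L = (\<Sum>n. q ^ Suc n)"
  have "0 < q" "q < 1"
    using r by (auto simp: q_def field_simps)
  then have "(\<Sum>n. ennreal (q ^ Suc n)) = ennreal L"
    unfolding L_def by (intro suminf_ennreal2) auto
  then have "(\<integral>\<^sup>+ x. hol_const {0..1} \<beta> (spike (1/2)) x \<partial>spike_sample r) \<le> ennreal L"
    using nn_integral_hol_const_spike_sample[OF r(1,2) assms(1), folded q_def] by simp
  then have avg: "spike (1/2) \<in> avgHol \<beta> L {0..1} (spike_sample r)"
    unfolding avgHol_def mem_Collect_eq by (rule conjI[OF spike_range])
  have not_Hol: "\<forall>M>0. spike (1/2) \<notin> Hol \<beta> M {0..1::real}"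
    using assms(1) by (intro allI impI spike_not_Hol) auto
  have not_weakLip: "\<forall>M>0. spike (1/2) \<notin> weakLip M {0..1} (spike_sample r)"
    using spike_not_weakLip[OF r(1,2)] by blast
  show ?thesis
    using prob_space_spike_sample[OF r(1,2)] space_spike_sample[OF r(1,2)]
      sets_spike_sample[OF r(1,2)] spike_range[of "1/2::real" "{0..1}"]
      hol_const_spike_measurable_spike_sample[OF r(1,2) assms(1)] hol_const_spike_measurable_spike_sample[OF r(1,2), of 1]
      avg not_Hol not_weakLip
    by (intro exI[of _ "spike_sample r"] exI[of _ "spike (1/2)"] exI[of _ L] conjI) simp_all
qed

end
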